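(* Let $(R,\mathfrak m)$ be a noetherian local ring and $M$ an arbitrary $R$-module. Then $$\operatorname{Ass}_R(D(M))\subseteq \operatorname{Att}_R(M),$$ and the set of prime ideals which are maximal (with respect to inclusion) in $\operatorname{Ass}_R(D(M))$ coincides with the set of prime ideals which are maximal in $\operatorname{Att}_R(M)$.
   Context: $E=E_R(R/\mathfrak m)$ denotes a fixed injective hull of $R/\mathfrak m$, and $D(\cdot)=\operatorname{Hom}_R(\cdot,E)$ is the Matlis duality functor. For an arbitrary $R$-module $N$ (not necessarily finitely generated or artinian): $\operatorname{Ass}_R(N)$ is the set of prime ideals $\mathfrak p$ of $R$ such that $\mathfrak p=\operatorname{Ann}_R(n)$ for some $n\in N$; $\operatorname{Att}_R(N)$ is the set of prime ideals $\mathfrak p$ of $R$ such that $\mathfrak p=\operatorname{Ann}_R(N/U)$ for some $R$-submodule $U\subseteq N$. *)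

theory Defs
  imports Main "HOL.Modules"
begin

text \<open>Commutative rings are types of class comm_ring_1; R-modules are given by a
scalar multiplication satisfying the HOL locale module (Main, theory Modules).\<close>

definition r_ideal :: "'a::comm_ring_1 set \<Rightarrow> bool" where
  "r_ideal I \<longleftrightarrow> module.subspace ((*) :: 'a \<Rightarrow> 'a \<Rightarrow> 'a) I"

definition prime_ideal :: "'a::comm_ring_1 set \<Rightarrow> bool" where
  "prime_ideal P \<longleftrightarrow> r_ideal P \<and> P \<noteq> UNIV \<and> (\<forall>a b. a * b \<in> P \<longrightarrow> a \<in> P \<or> b \<in> P)"

definition noetherian_ring :: "'a::comm_ring_1 itself \<Rightarrow> bool" where
  "noetherian_ring _ \<longleftrightarrow>
     (\<forall>I::'a set. r_ideal I \<longrightarrow> (\<exists>F. finite F \<and> I = module.span ((*) :: 'a \<Rightarrow> 'a \<Rightarrow> 'a) F))"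

definition local_ring_max :: "'a::comm_ring_1 set \<Rightarrow> bool" where
  "local_ring_max m \<longleftrightarrow> r_ideal m \<and> m \<noteq> UNIV \<and> (\<forall>I. r_ideal I \<and> I \<noteq> UNIV \<longrightarrow> I \<subseteq> m)"

text \<open>Injectivity of a module (Baer's criterion).\<close>
definition baer_injective :: "('a::comm_ring_1 \<Rightarrow> 'e::ab_group_add \<Rightarrow> 'e) \<Rightarrow> bool" where
  "baer_injective sE \<longleftrightarrow>
     (\<forall>(I::'a set) (g::'a \<Rightarrow> 'e). r_ideal I
        \<and> (\<forall>a\<in>I. \<forall>b\<in>I. g (a + b) = g a + g b)
        \<and> (\<forall>r. \<forall>a\<in>I. g (r * a) = sE r (g a))
        \<longrightarrow> (\<exists>x. \<forall>a\<in>I. g a = sE a x))"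

text \<open>E (with scalar multiplication sE) is an injective hull of R/m: E is an
injective module containing a cyclic submodule R e isomorphic to R/m
(i.e. Ann(e) = m) which is essential in E.\<close>
definition injective_hull_residue ::
  "('a::comm_ring_1 \<Rightarrow> 'e::ab_group_add \<Rightarrow> 'e) \<Rightarrow> 'a set \<Rightarrow> bool" where
  "injective_hull_residue sE m \<longleftrightarrow> module sE \<and> baer_injective sE \<and>
     (\<exists>e. e \<noteq> 0 \<and> {r. sE r e = 0} = m \<and>
        (\<forall>N. module.subspace sE N \<and> N \<noteq> {0} \<longrightarrow> N \<inter> module.span sE {e} \<noteq> {0}))"

text \<open>Ass_R(D(M)) where D(M) = Hom_R(M,E) with pointwise module structure:
the annihilator of f in D(M) is {r. r f = 0} = {r. \<forall>x. r (f x) = 0}.\<close>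
definition Ass_matlis_dual ::
  "('a::comm_ring_1 \<Rightarrow> 'm::ab_group_add \<Rightarrow> 'm) \<Rightarrow> ('a \<Rightarrow> 'e::ab_group_add \<Rightarrow> 'e) \<Rightarrow> 'a set set" where
  "Ass_matlis_dual sM sE =
     {P. prime_ideal P \<and> (\<exists>f. module_hom sM sE f \<and> P = {r. \<forall>x. sE r (f x) = 0})}"

text \<open>Att_R(M): primes of the form Ann_R(M/U), U a submodule of M.\<close>
definition Att :: "('a::comm_ring_1 \<Rightarrow> 'm::ab_group_add \<Rightarrow> 'm) \<Rightarrow> 'a set set" where
  "Att sM = {P. prime_ideal P \<and> (\<exists>U. module.subspace sM U \<and> P = {r. \<forall>x. sM r x \<in> U})}"

definition maximal_elements :: "'a set set \<Rightarrow> 'a set set" where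
  "maximal_elements A = {P \<in> A. \<forall>Q\<in>A. P \<subseteq> Q \<longrightarrow> Q = P}"

end

theory Submission
  imports Defs "HOL-Library.Function_Algebras" "HOL-Library.Product_Plus"
begin

text \<open>
Sending a homomorphism f : M \<rightarrow> E to its kernel shows Ann f = Ann (M / ker f), so
Ass D(M) \<subseteq> Att M. Conversely, let P = Ann (M / U) be attached and x \<notin> U. The ideal
(U : x) is proper, hence contained in \<m> = Ann e, so u + r x \<mapsto> r e is a well defined
homomorphism U + R x \<rightarrow> E; injectivity of E (Baer's criterion plus Zorn's lemma on
partial homomorphisms) extends it to M. Thus the homomorphisms M \<rightarrow> E vanishing on U
form a nonzero submodule of D(M), all killed by P; by noetherianity some nonzero member
has a maximal annihilator, which is prime and contains P. So every attached prime lies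
below an associated prime of D(M), and the maximal elements of the two sets agree.
\<close>

lemma maximal_elements_eq_if_cofinal:
  assumes "A \<subseteq> B" and "\<And>Y. Y \<in> B \<Longrightarrow> \<exists>X\<in>A. Y \<subseteq> X"
  shows "maximal_elements A = maximal_elements B"
proof (intro equalityI subsetI)
  fix P assume P: "P \<in> maximal_elements A"
  have "Q = P" if "Q \<in> B" "P \<subseteq> Q" for Q
  proof -
    obtain X where "X \<in> A" "Q \<subseteq> X" using assms(2) \<open>Q \<in> B\<close> by blast
    then have "X = P" using P \<open>P \<subseteq> Q\<close> by (auto simp: maximal_elements_def)
    then show ?thesis using \<open>P \<subseteq> Q\<close> \<open>Q \<subseteq> X\<close> by blast
  qed
  then show "P \<in> maximal_elements B" using P assms(1) by (auto simp: maximal_elements_def)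
next
  fix P assume P: "P \<in> maximal_elements B"
  then have "P \<in> B" by (simp add: maximal_elements_def)
  then obtain X where "X \<in> A" "P \<subseteq> X" using assms(2) by blast
  then have "X = P" using P assms(1) by (auto simp: maximal_elements_def)
  then show "P \<in> maximal_elements A" using P \<open>X \<in> A\<close> assms(1) by (auto simp: maximal_elements_def)
qed

lemma module_mult: "module ((*) :: 'a::comm_ring_1 \<Rightarrow> 'a \<Rightarrow> 'a)"
  by unfold_locales (auto simp: algebra_simps)

lemma subset_chain_Union_common_member:
  assumes "subset.chain \<A> \<C>" and "x \<in> \<Union>\<C>" and "y \<in> \<Union>\<C>"
  shows "\<exists>S\<in>\<C>. x \<in> S \<and> y \<in> S"
proof -
  obtain S T where "S \<in> \<C>" "T \<in> \<C>" "x \<in> S" "y \<in> T" using assms(2,3) by blast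
  moreover have "S \<subseteq> T \<or> T \<subseteq> S"
    using assms(1) \<open>S \<in> \<C>\<close> \<open>T \<in> \<C>\<close> unfolding subset_chain_def by blast
  ultimately show ?thesis by blast
qed

lemma (in module) subspace_Union_chain:
  assumes "\<C> \<noteq> {}" and "subset.chain (Collect subspace) \<C>"
  shows "subspace (\<Union>\<C>)"
proof (rule subspaceI)
  have sub: "\<And>S. S \<in> \<C> \<Longrightarrow> subspace S"
    using assms(2) by (auto simp: subset_chain_def)
  show "0 \<in> \<Union>\<C>" using assms(1) sub subspace_0 by blast
  show "x + y \<in> \<Union>\<C>" if xy: "x \<in> \<Union>\<C>" "y \<in> \<Union>\<C>" for x y
  proof -
    obtain S where "S \<in> \<C>" "x \<in> S" "y \<in> S"
      using subset_chain_Union_common_member[OF assms(2) xy] by blast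
    then show ?thesis using sub subspace_add by blast
  qed
  show "c *s x \<in> \<Union>\<C>" if "x \<in> \<Union>\<C>" for c x
    using that sub subspace_scale by blast
qed

lemma noetherian_ring_ex_maximal:
  fixes \<S> :: "'a::comm_ring_1 set set"
  assumes "noetherian_ring TYPE('a)" and "\<S> \<noteq> {}" and "\<And>I. I \<in> \<S> \<Longrightarrow> r_ideal I"
  shows "\<exists>I\<in>\<S>. \<forall>J\<in>\<S>. I \<subseteq> J \<longrightarrow> J = I"
proof (rule subset_Zorn_nonempty[OF assms(2)])
  interpret R: module "(*) :: 'a \<Rightarrow> 'a \<Rightarrow> 'a" by (rule module_mult)
  fix \<C> assume "\<C> \<noteq> {}" and chain: "subset.chain \<S> \<C>"
  have "subset.chain (Collect R.subspace) \<C>"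
    using chain assms(3) by (auto simp: subset_chain_def r_ideal_def)
  then have "r_ideal (\<Union>\<C>)"
    unfolding r_ideal_def using R.subspace_Union_chain \<open>\<C> \<noteq> {}\<close> by blast
  then obtain F where "finite F" and F: "\<Union>\<C> = R.span F"
    using assms(1) by (auto simp: noetherian_ring_def)
  moreover have "F \<subseteq> \<Union>\<C>" unfolding F by (rule R.span_superset)
  ultimately obtain B where "B \<in> \<C>" "F \<subseteq> B"
    using finite_subset_Union_chain \<open>\<C> \<noteq> {}\<close> chain by metis
  moreover have "R.subspace B" using \<open>B \<in> \<C>\<close> chain assms(3) by (auto simp: subset_chain_def r_ideal_def)
  ultimately have "\<Union>\<C> = B" using F R.span_minimal by blast
  then show "\<Union>\<C> \<in> \<S>" using \<open>B \<in> \<C>\<close> chain by (auto simp: subset_chain_def)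
qed

definition scale_prod ::
  "('a \<Rightarrow> 'm \<Rightarrow> 'm) \<Rightarrow> ('a \<Rightarrow> 'e \<Rightarrow> 'e) \<Rightarrow> 'a \<Rightarrow> 'm \<times> 'e \<Rightarrow> 'm \<times> 'e" where
  "scale_prod sM sE r p = (sM r (fst p), sE r (snd p))"

lemma module_scale_prod:
  assumes "module sM" and "module sE"
  shows "module (scale_prod sM sE)"
proof -
  interpret M: module sM by fact
  interpret E: module sE by fact
  show ?thesis
    by unfold_locales
      (auto simp: scale_prod_def M.scale_right_distrib E.scale_right_distrib
        M.scale_left_distrib E.scale_left_distrib)
qed

definition linear_graph ::
  "('a::comm_ring_1 \<Rightarrow> 'm::ab_group_add \<Rightarrow> 'm) \<Rightarrow> ('a \<Rightarrow> 'e::ab_group_add \<Rightarrow> 'e) \<Rightarrow> ('m \<times> 'e) set \<Rightarrow> bool"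
  where "linear_graph sM sE G \<longleftrightarrow> module.subspace (scale_prod sM sE) G \<and> single_valued G"

lemma linear_graph_Union_chain:
  assumes "module sM" and "module sE"
    and "\<C> \<noteq> {}" and chain: "subset.chain (Collect (linear_graph sM sE)) \<C>"
  shows "linear_graph sM sE (\<Union>\<C>)"
proof -
  interpret P: module "scale_prod sM sE" using assms(1,2) by (rule module_scale_prod)
  have "subset.chain (Collect P.subspace) \<C>"
    using chain by (auto simp: subset_chain_def linear_graph_def)
  then have "P.subspace (\<Union>\<C>)" using P.subspace_Union_chain \<open>\<C> \<noteq> {}\<close> by blast
  moreover have "single_valued (\<Union>\<C>)"
  proof (rule single_valuedI)
    fix x y z assume "(x, y) \<in> \<Union>\<C>" "(x, z) \<in> \<Union>\<C>"
    then obtain G where "G \<in> \<C>" "(x, y) \<in> G" "(x, z) \<in> G"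
      using subset_chain_Union_common_member[OF chain] by blast
    moreover have "single_valued G"
      using \<open>G \<in> \<C>\<close> chain by (auto simp: subset_chain_def linear_graph_def)
    ultimately show "y = z" by (auto dest: single_valuedD)
  qed
  ultimately show ?thesis by (simp add: linear_graph_def)
qed

definition adjoin_graph ::
  "('a \<Rightarrow> 'm::ab_group_add \<Rightarrow> 'm) \<Rightarrow> ('a \<Rightarrow> 'e::ab_group_add \<Rightarrow> 'e) \<Rightarrow> ('m \<times> 'e) set \<Rightarrow> 'm \<Rightarrow> 'e \<Rightarrow> ('m \<times> 'e) set"
  where "adjoin_graph sM sE G x e = {p + scale_prod sM sE r (x, e) | p r. p \<in> G}"

lemma adjoin_graph_superset:
  assumes "module sM" and "module sE" and "(0, 0) \<in> G"
  shows "G \<subseteq> adjoin_graph sM sE G x e" and "(x, e) \<in> adjoin_graph sM sE G x e"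
proof -
  interpret P: module "scale_prod sM sE" using assms(1,2) by (rule module_scale_prod)
  have "p = p + scale_prod sM sE 0 (x, e)" for p by simp
  then show "G \<subseteq> adjoin_graph sM sE G x e" unfolding adjoin_graph_def by blast
  have "(x, e) = (0, 0) + scale_prod sM sE 1 (x, e)" by simp
  then show "(x, e) \<in> adjoin_graph sM sE G x e" unfolding adjoin_graph_def using assms(3) by blast
qed

lemma linear_graph_adjoin_graph:
  assumes "module sM" and "module sE" and G: "linear_graph sM sE G"
    and compatible: "\<And>r y. (sM r x, y) \<in> G \<Longrightarrow> y = sE r e"
  shows "linear_graph sM sE (adjoin_graph sM sE G x e)"
proof -
  interpret M: module sM by fact
  interpret E: module sE by fact
  interpret P: module "scale_prod sM sE" using assms(1,2) by (rule module_scale_prod)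
  let ?v = "(x, e)"
  have subG: "P.subspace G" using G by (simp add: linear_graph_def)
  have "P.subspace (adjoin_graph sM sE G x e)" unfolding adjoin_graph_def
  proof (rule P.subspaceI)
    have "0 = 0 + scale_prod sM sE 0 ?v" by simp
    then show "0 \<in> {p + scale_prod sM sE r ?v | p r. p \<in> G}"
      using P.subspace_0[OF subG] by blast
  next
    fix u w assume "u \<in> {p + scale_prod sM sE r ?v | p r. p \<in> G}" "w \<in> {p + scale_prod sM sE r ?v | p r. p \<in> G}"
    then obtain p r q s where "p \<in> G" "q \<in> G" "u = p + scale_prod sM sE r ?v" "w = q + scale_prod sM sE s ?v"
      by blast
    moreover have "u + w = (p + q) + scale_prod sM sE (r + s) ?v"
      using calculation by (simp add: P.scale_left_distrib algebra_simps)
    ultimately show "u + w \<in> {p + scale_prod sM sE r ?v | p r. p \<in> G}"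
      using P.subspace_add[OF subG] by blast
  next
    fix c u assume "u \<in> {p + scale_prod sM sE r ?v | p r. p \<in> G}"
    then obtain p r where "p \<in> G" "u = p + scale_prod sM sE r ?v" by blast
    moreover have "scale_prod sM sE c u = scale_prod sM sE c p + scale_prod sM sE (c * r) ?v"
      using calculation by (simp add: P.scale_right_distrib)
    ultimately show "scale_prod sM sE c u \<in> {p + scale_prod sM sE r ?v | p r. p \<in> G}"
      using P.subspace_scale[OF subG] by blast
  qed
  moreover have "single_valued (adjoin_graph sM sE G x e)"
  proof (rule single_valuedI)
    fix a y z assume "(a, y) \<in> adjoin_graph sM sE G x e" "(a, z) \<in> adjoin_graph sM sE G x e"
    then obtain p r q s where pq: "p \<in> G" "q \<in> G"
      and y: "(a, y) = p + scale_prod sM sE r ?v" and z: "(a, z) = q + scale_prod sM sE s ?v"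
      unfolding adjoin_graph_def by blast
    have "q - p \<in> G" using P.subspace_diff[OF subG pq(2,1)] .
    moreover have "fst (q - p) = sM (r - s) x"
      using y z by (auto simp: scale_prod_def M.scale_left_diff_distrib prod_eq_iff algebra_simps)
    ultimately have "snd (q - p) = sE (r - s) e"
      using compatible by (metis prod.collapse)
    then show "y = z"
      using y z by (auto simp: scale_prod_def E.scale_left_diff_distrib prod_eq_iff algebra_simps)
  qed
  ultimately show ?thesis by (simp add: linear_graph_def)
qed

lemma baer_injective_ex_compatible:
  assumes "module sM" and "module sE" and "baer_injective sE" and G: "linear_graph sM sE G"
  shows "\<exists>e. \<forall>r y. (sM r x, y) \<in> G \<longrightarrow> y = sE r e"
proof -
  interpret M: module sM by fact
  interpret P: module "scale_prod sM sE" using assms(1,2) by (rule module_scale_prod)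
  interpret R: module "(*) :: 'a \<Rightarrow> 'a \<Rightarrow> 'a" by (rule module_mult)
  have subG: "P.subspace G" and svG: "single_valued G" using G by (auto simp: linear_graph_def)
  define I where "I = {r. \<exists>y. (sM r x, y) \<in> G}"
  define g where "g r = (THE y. (sM r x, y) \<in> G)" for r
  have "g r = y" if "(sM r x, y) \<in> G" for r y
    using that svG unfolding g_def by (auto dest: single_valuedD)
  then have g: "(sM r x, y) \<in> G \<longleftrightarrow> r \<in> I \<and> g r = y" for r y
    unfolding I_def by blast
  have add: "(sM (a + b) x, g a + g b) \<in> G" if "a \<in> I" "b \<in> I" for a b
    using P.subspace_add[OF subG, of "(sM a x, g a)" "(sM b x, g b)"] that g
    by (simp add: M.scale_left_distrib)
  have scale: "(sM (c * a) x, sE c (g a)) \<in> G" if "a \<in> I" for c a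
    using P.subspace_scale[OF subG, of "(sM a x, g a)" c] that g by (simp add: scale_prod_def)
  have "r_ideal I" unfolding r_ideal_def
  proof (rule R.subspaceI)
    show "0 \<in> I" using P.subspace_0[OF subG] by (auto simp: I_def zero_prod_def)
  qed (use add scale g in blast)+
  moreover have "\<forall>a\<in>I. \<forall>b\<in>I. g (a + b) = g a + g b" and "\<forall>r. \<forall>a\<in>I. g (r * a) = sE r (g a)"
    using add scale g by blast+
  ultimately obtain e where "\<forall>a\<in>I. g a = sE a e"
    using \<open>baer_injective sE\<close> unfolding baer_injective_def by blast
  then have "\<forall>r y. (sM r x, y) \<in> G \<longrightarrow> y = sE r e" using g by auto
  then show ?thesis ..
qed

lemma linear_graph_extends_to_hom:
  assumes "module sM" and "module sE" and "baer_injective sE" and "linear_graph sM sE G\<^sub>0"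
  shows "\<exists>h. module_hom sM sE h \<and> (\<forall>(x, y) \<in> G\<^sub>0. h x = y)"
proof -
  interpret P: module "scale_prod sM sE" using assms(1,2) by (rule module_scale_prod)
  define \<G> where "\<G> = {G. linear_graph sM sE G \<and> G\<^sub>0 \<subseteq> G}"
  have "\<exists>G\<in>\<G>. \<forall>G'\<in>\<G>. G \<subseteq> G' \<longrightarrow> G' = G"
  proof (rule subset_Zorn_nonempty)
    show "\<G> \<noteq> {}" using assms(4) by (auto simp: \<G>_def)
    fix \<C> assume "\<C> \<noteq> {}" and "subset.chain \<G> \<C>"
    then have "subset.chain (Collect (linear_graph sM sE)) \<C>" and "G\<^sub>0 \<subseteq> \<Union>\<C>"
      by (auto simp: subset_chain_def \<G>_def) blast
    then show "\<Union>\<C> \<in> \<G>"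
      using linear_graph_Union_chain[OF assms(1,2) \<open>\<C> \<noteq> {}\<close>] by (simp add: \<G>_def)
  qed
  then obtain G where G: "linear_graph sM sE G" "G\<^sub>0 \<subseteq> G"
    and G_max: "\<And>G'. linear_graph sM sE G' \<Longrightarrow> G \<subseteq> G' \<Longrightarrow> G' = G"
    by (auto simp: \<G>_def)
  have subG: "P.subspace G" and svG: "single_valued G" using G(1) by (auto simp: linear_graph_def)
  have total: "\<exists>y. (x, y) \<in> G" for x
  proof -
    \<comment> \<open>A maximal graph absorbs every point, by Baer's criterion.\<close>
    obtain e where "\<forall>r y. (sM r x, y) \<in> G \<longrightarrow> y = sE r e"
      using baer_injective_ex_compatible[OF assms(1-3) G(1)] by blast
    then have "linear_graph sM sE (adjoin_graph sM sE G x e)"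
      using linear_graph_adjoin_graph[OF assms(1,2) G(1)] by blast
    moreover have "(0, 0) \<in> G" using P.subspace_0[OF subG] by (simp add: zero_prod_def)
    ultimately show ?thesis using adjoin_graph_superset[OF assms(1,2)] G_max by metis
  qed
  define h where "h x = (THE y. (x, y) \<in> G)" for x
  have "h x = y" if "(x, y) \<in> G" for x y
    using that svG unfolding h_def by (auto dest: single_valuedD)
  then have h: "(x, y) \<in> G \<longleftrightarrow> h x = y" for x y
    using total by blast
  have "module_hom sM sE h" unfolding module_hom_iff
  proof (intro conjI allI)
    show "h (x + y) = h x + h y" for x y
      using P.subspace_add[OF subG, of "(x, h x)" "(y, h y)"] h by simp
    show "h (sM c x) = sE c (h x)" for c x
      using P.subspace_scale[OF subG, of "(x, h x)" c] h by (simp add: scale_prod_def)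
  qed (fact assms)+
  then show ?thesis using G(2) h by blast
qed

lemma (in module) r_ideal_annihilator: "r_ideal {r. r *s v = 0}"
proof -
  interpret R: module "(*) :: 'a \<Rightarrow> 'a \<Rightarrow> 'a" by (rule module_mult)
  show ?thesis unfolding r_ideal_def
    by (rule R.subspaceI) (auto simp: scale_left_distrib simp flip: scale_scale)
qed

lemma (in module) prime_ideal_maximal_annihilator:
  assumes closed: "\<And>r w. w \<in> F \<Longrightarrow> r *s w \<in> F" and "v \<in> F" and "v \<noteq> 0"
    and maximal: "\<And>w. w \<in> F \<Longrightarrow> w \<noteq> 0 \<Longrightarrow> {r. r *s v = 0} \<subseteq> {r. r *s w = 0} \<Longrightarrow>
      {r. r *s w = 0} = {r. r *s v = 0}"
  shows "prime_ideal {r. r *s v = 0}"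
  unfolding prime_ideal_def
proof (intro conjI allI impI)
  show "r_ideal {r. r *s v = 0}" by (rule r_ideal_annihilator)
  have "1 \<notin> {r. r *s v = 0}" using \<open>v \<noteq> 0\<close> by simp
  then show "{r. r *s v = 0} \<noteq> UNIV" by blast
next
  fix a b assume ab: "a * b \<in> {r. r *s v = 0}"
  show "a \<in> {r. r *s v = 0} \<or> b \<in> {r. r *s v = 0}"
  proof (rule disjCI)
    assume "b \<notin> {r. r *s v = 0}"
    then have "b *s v \<in> F" "b *s v \<noteq> 0" using closed \<open>v \<in> F\<close> by auto
    moreover have "{r. r *s v = 0} \<subseteq> {r. r *s (b *s v) = 0}"
      by (simp add: subset_iff scale_left_commute[of _ b] del: scale_scale)
    ultimately have "{r. r *s (b *s v) = 0} = {r. r *s v = 0}" by (rule maximal)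
    moreover have "a *s (b *s v) = 0" using ab by simp
    ultimately show "a \<in> {r. r *s v = 0}" by blast
  qed
qed

definition scale_fun :: "('a \<Rightarrow> 'e \<Rightarrow> 'e) \<Rightarrow> 'a \<Rightarrow> ('m \<Rightarrow> 'e) \<Rightarrow> 'm \<Rightarrow> 'e" where
  "scale_fun sE r f = (\<lambda>x. sE r (f x))"

lemma scale_fun_eq_0_iff: "scale_fun sE r f = 0 \<longleftrightarrow> (\<forall>x. sE r (f x) = 0)"
  by (simp add: scale_fun_def fun_eq_iff)

lemma module_scale_fun:
  assumes "module sE" shows "module (scale_fun sE :: 'a::comm_ring_1 \<Rightarrow> ('m \<Rightarrow> 'e::ab_group_add) \<Rightarrow> 'm \<Rightarrow> 'e)"
proof -
  interpret E: module sE by fact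
  show ?thesis
    by unfold_locales
      (auto simp: scale_fun_def E.scale_right_distrib E.scale_left_distrib)
qed

lemma Ass_matlis_dual_subset_Att: "Ass_matlis_dual sM sE \<subseteq> Att sM"
proof
  fix P assume "P \<in> Ass_matlis_dual sM sE"
  then obtain f where "prime_ideal P" and f: "module_hom sM sE f"
    and P: "P = {r. \<forall>x. sE r (f x) = 0}"
    by (auto simp: Ass_matlis_dual_def)
  interpret f: module_hom sM sE f by (fact f)
  have "P = {r. \<forall>x. sM r x \<in> {x. f x = 0}}" by (simp add: P f.scale)
  then show "P \<in> Att sM"
    using \<open>prime_ideal P\<close> f.subspace_kernel by (auto simp: Att_def)
qed

lemma ex_hom_vanishing_on_submodule:
  assumes "module sM" and "module sE" and "baer_injective sE" and U: "module.subspace sM U"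
    and "{r. sM r x \<in> U} \<subseteq> {r. sE r e = 0}"
  shows "\<exists>g. module_hom sM sE g \<and> (\<forall>u\<in>U. g u = 0) \<and> g x = e"
proof -
  interpret M: module sM by fact
  interpret E: module sE by fact
  interpret P: module "scale_prod sM sE" using assms(1,2) by (rule module_scale_prod)
  have "P.subspace (U \<times> {0})"
    using U by (intro P.subspaceI) (auto simp: zero_prod_def scale_prod_def M.subspace_0 M.subspace_add M.subspace_scale)
  then have "linear_graph sM sE (U \<times> {0})" by (simp add: linear_graph_def single_valued_def)
  moreover have "(sM r x, y) \<in> U \<times> {0} \<Longrightarrow> y = sE r e" for r y using assms(5) by auto
  ultimately have "linear_graph sM sE (adjoin_graph sM sE (U \<times> {0}) x e)"
    by (rule linear_graph_adjoin_graph[OF assms(1,2)])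
  then obtain g where "module_hom sM sE g"
    and graph: "\<forall>(v, y) \<in> adjoin_graph sM sE (U \<times> {0}) x e. g v = y"
    using linear_graph_extends_to_hom[OF assms(1-3)] by blast
  moreover have "U \<times> {0} \<subseteq> adjoin_graph sM sE (U \<times> {0}) x e" "(x, e) \<in> adjoin_graph sM sE (U \<times> {0}) x e"
    using adjoin_graph_superset[OF assms(1,2)] M.subspace_0[OF U] by auto
  then have "\<forall>u\<in>U. g u = 0" and "g x = e" using graph by auto
  ultimately show ?thesis by blast
qed

lemma Att_below_Ass_matlis_dual:
  fixes m :: "'a::comm_ring_1 set"
    and sM :: "'a \<Rightarrow> 'm::ab_group_add \<Rightarrow> 'm"
    and sE :: "'a \<Rightarrow> 'e::ab_group_add \<Rightarrow> 'e"
  assumes "noetherian_ring TYPE('a)" and "local_ring_max m"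
    and "module sM" and "module sE" and "baer_injective sE" and e: "{r. sE r e = 0} = m"
    and "P \<in> Att sM"
  shows "\<exists>Q\<in>Ass_matlis_dual sM sE. P \<subseteq> Q"
proof -
  interpret M: module sM by fact
  interpret E: module sE by fact
  interpret D: module "scale_fun sE :: 'a \<Rightarrow> ('m \<Rightarrow> 'e) \<Rightarrow> 'm \<Rightarrow> 'e" using assms(4) by (rule module_scale_fun)
  obtain U where "prime_ideal P" and U: "M.subspace U" and P: "P = {r. \<forall>x. sM r x \<in> U}"
    using \<open>P \<in> Att sM\<close> by (auto simp: Att_def)
  then obtain x where "x \<notin> U" by (auto simp: prime_ideal_def)
  have "r_ideal {r. sM r x \<in> U}"
    unfolding r_ideal_def by (rule module_hom.subspace_linear_preimage[OF M.module_hom_scale_left U])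
  moreover have "1 \<notin> {r. sM r x \<in> U}" using \<open>x \<notin> U\<close> by simp
  ultimately have "{r. sM r x \<in> U} \<subseteq> {r. sE r e = 0}"
    using \<open>local_ring_max m\<close> e unfolding local_ring_max_def by blast
  then obtain g\<^sub>0 where g\<^sub>0: "module_hom sM sE g\<^sub>0" "\<forall>u\<in>U. g\<^sub>0 u = 0" "g\<^sub>0 x = e"
    using ex_hom_vanishing_on_submodule[OF assms(3-5) U] by blast
  have "e \<noteq> 0" using e \<open>local_ring_max m\<close> by (auto simp: local_ring_max_def)
  define F where "F = {g. module_hom sM sE g \<and> (\<forall>u\<in>U. g u = 0)}"
  define \<S> where "\<S> = (\<lambda>g. {r. scale_fun sE r g = 0}) ` {g \<in> F. g \<noteq> 0}"
  have "\<S> \<noteq> {}" using g\<^sub>0 \<open>e \<noteq> 0\<close> unfolding \<S>_def F_def by force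
  moreover have "\<And>I. I \<in> \<S> \<Longrightarrow> r_ideal I" using D.r_ideal_annihilator by (auto simp: \<S>_def)
  ultimately obtain Q where "Q \<in> \<S>" and Q_max: "\<forall>J\<in>\<S>. Q \<subseteq> J \<longrightarrow> J = Q"
    using noetherian_ring_ex_maximal[OF assms(1)] by blast
  then obtain g where g: "g \<in> F" "g \<noteq> 0" and Q: "Q = {r. scale_fun sE r g = 0}"
    by (auto simp: \<S>_def)
  have g_max: "{r. scale_fun sE r h = 0} = {r. scale_fun sE r g = 0}"
    if "h \<in> F" "h \<noteq> 0" "{r. scale_fun sE r g = 0} \<subseteq> {r. scale_fun sE r h = 0}" for h
    using Q_max that unfolding Q \<S>_def by blast
  have "prime_ideal {r. scale_fun sE r g = 0}"
    by (rule D.prime_ideal_maximal_annihilator[OF _ g g_max])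
      (auto simp: F_def scale_fun_def module_hom_iff E.scale_right_distrib mult.commute)
  then have "{r. \<forall>x. sE r (g x) = 0} \<in> Ass_matlis_dual sM sE"
    using g(1) by (auto simp: Ass_matlis_dual_def F_def scale_fun_eq_0_iff)
  moreover have "P \<subseteq> {r. \<forall>x. sE r (g x) = 0}"
  proof -
    have "sE r (g y) = g (sM r y)" for r y using g(1) by (simp add: F_def module_hom_iff)
    then show ?thesis using g(1) by (simp add: P F_def subset_iff)
  qed
  ultimately show ?thesis by blast
qed

theorem theorem1p11:
  fixes m :: "'a::comm_ring_1 set"
    and sM :: "'a \<Rightarrow> 'm::ab_group_add \<Rightarrow> 'm"
    and sE :: "'a \<Rightarrow> 'e::ab_group_add \<Rightarrow> 'e"
  assumes "noetherian_ring TYPE('a)"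
    and "local_ring_max m"
    and "module sM"
    and "injective_hull_residue sE m"
  shows "Ass_matlis_dual sM sE \<subseteq> Att sM \<and>
         maximal_elements (Ass_matlis_dual sM sE) = maximal_elements (Att sM)"
proof -
  obtain e where "module sE" and "baer_injective sE" and "{r. sE r e = 0} = m"
    using assms(4) by (auto simp: injective_hull_residue_def)
  then have "\<And>P. P \<in> Att sM \<Longrightarrow> \<exists>Q\<in>Ass_matlis_dual sM sE. P \<subseteq> Q"
    using Att_below_Ass_matlis_dual[OF assms(1-3)] by blast
  then have "maximal_elements (Ass_matlis_dual sM sE) = maximal_elements (Att sM)"
    by (rule maximal_elements_eq_if_cofinal[OF Ass_matlis_dual_subset_Att])
  with Ass_matlis_dual_subset_Att show ?thesis by blast
qed

end
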